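(* Let $\gamma\in(2/3,1)$ and consider the TBRW started at a finite initial condition $(T,x)$ with $\mathcal L_n=\mathrm{Ber}(n^{-\gamma})$. Then for every $\varepsilon<\frac{\gamma}{1-\gamma}-2$, \[ \mathbb P_{T,x;\mathcal L}\big(\Delta\tau_i<i^{1+\varepsilon}\text{ for infinitely many } i\big)=0 . \]
   Context: Tree Builder Random Walk (TBRW). Let $\mathcal L=(\mathcal L_n)_{n\ge1}$ be a sequence of probability laws on $\{0,1,2,\dots\}$ and let $(T_0,x_0)$ be an initial condition: $T_0$ is a finite rooted tree with a single self-loop attached at its root, and $x_0$ is a vertex of $T_0$. Let $(Z_n)_{n\ge1}$ be independent random variables with $Z_n\sim\mathcal L_n$. The TBRW is the process $((T_n,X_n))_{n\ge0}$ with $(T_0,X_0)=(T_0,x_0)$ where, for $n\ge1$, $T_n$ is obtained from $T_{n-1}$ by attaching $Z_n$ new leaves to $X_{n-1}$, and then $X_n$ is obtained by one step of simple random walk on $T_n$ from $X_{n-1}$ (self-loop counted twice in degrees; moves along a uniformly chosen edge-end). Its law is $\mathbb P_{T_0,x_0;\mathcal L}$. Growth times: $\tau_0=0$, $\tau_k=\inf\{n>\tau_{k-1}:Z_n\ge1\}$; $\Delta\tau_k=\tau_{k+1}-\tau_k$. *)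

theory Defs
  imports "HOL-Probability.Probability"
begin

text \<open>Growth times of the TBRW, determined by the leaf-count sequence Z:
  tau 0 = 0 and tau (k+1) = least n > tau k with Z n >= 1.
  (If no such n exists, LEAST returns an unspecified value; this happens
  only on a null event under the hypotheses of the theorem.)\<close>
fun growth_time :: "(nat \<Rightarrow> nat) \<Rightarrow> nat \<Rightarrow> nat" where
  "growth_time Z 0 = 0"
| "growth_time Z (Suc k) = (LEAST n. growth_time Z k < n \<and> 1 \<le> Z n)"

definition delta_growth_time :: "(nat \<Rightarrow> nat) \<Rightarrow> nat \<Rightarrow> nat" where
  "delta_growth_time Z k = growth_time Z (Suc k) - growth_time Z k"

definition ber_nat :: "real \<Rightarrow> nat pmf" where
  "ber_nat p = map_pmf (\<lambda>b. if b then 1 else 0) (bernoulli_pmf p)"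

end

theory Submission
  imports Defs
begin

(* The growth times are the successes of independent Bernoulli(n^-\<gamma>) trials, and three
   almost sure facts combine. There are infinitely many successes, since the probability of
   none in [n, N] is at most (n - 1)/N. For any a > 1 - \<gamma>, eventually at most (2m)^a
   successes occur up to time m: Markov's inequality at the dyadic times 2^k and
   Borel-Cantelli. For b < 2\<gamma> - 1, only finitely many successes m are followed by another
   within (2m)^b steps, by Borel-Cantelli again, as this has probability O(m^(b - 2\<gamma>)).
   Now \<tau>_i = m forces i <= (2m)^a, so for \<epsilon> >= 0 a gap \<Delta>\<tau>_i < i^(1+\<epsilon>) is such a fast
   regrowth with b = a(1 + \<epsilon>); suitable a and b exist because (1 + \<epsilon>)(1 - \<gamma>) < 2\<gamma> - 1,
   which is the hypothesis \<epsilon> < \<gamma>/(1 - \<gamma>) - 2. *)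

lemma sum_powr_neg_le:
  fixes g :: real
  assumes "0 \<le> g" "g < 1"
  shows "(\<Sum>n=1..m. real n powr (-g)) \<le> real m powr (1 - g) / (1 - g)"
proof (induction m)
  case 0
  then show ?case by simp
next
  case (Suc m)
  have increment:
    "(1 - g) * real (Suc m) powr (-g) \<le> real (Suc m) powr (1 - g) - real m powr (1 - g)"
  proof (cases "m = 0")
    case True
    then show ?thesis using assms by simp
  next
    case False
    obtain x where x: "real m < x" "x < real m + 1"
      "(real m + 1) powr (1 - g) - real m powr (1 - g)
         = (real m + 1 - real m) * ((1 - g) * x powr (1 - g - 1))"
      using MVT2[of "real m" "real m + 1" "\<lambda>x. x powr (1 - g)" "\<lambda>x. (1 - g) * x powr (1 - g - 1)"]
        False has_real_derivative_powr[of _ "1 - g"] by auto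
    have "real (Suc m) powr (-g) \<le> x powr (-g)"
      using x False assms by (intro powr_mono2') auto
    then show ?thesis using x assms by (simp add: add.commute)
  qed
  have "(\<Sum>n=1..Suc m. real n powr (-g)) \<le> real m powr (1 - g) / (1 - g) + real (Suc m) powr (-g)"
    using Suc by simp
  also have "\<dots> \<le> real (Suc m) powr (1 - g) / (1 - g)"
  proof -
    have "real (Suc m) powr (-g) \<le> (real (Suc m) powr (1 - g) - real m powr (1 - g)) / (1 - g)"
      using increment assms by (simp add: pos_le_divide_eq mult.commute)
    then show ?thesis
      by (simp add: diff_divide_distrib)
  qed
  finally show ?case .
qed

lemma exponent_choice:
  fixes \<gamma> \<epsilon> :: real
  assumes "2/3 < \<gamma>" "\<gamma> < 1" "\<epsilon> < \<gamma> / (1 - \<gamma>) - 2"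
  obtains a e where "1 - \<gamma> < a" "a * (1 + e) - 2 * \<gamma> < -1" "0 \<le> e" "\<epsilon> \<le> e"
proof -
  define e where "e = max \<epsilon> 0"
  define t where "t = (2 * \<gamma> - 1) / (1 + e)"
  define a where "a = (1 - \<gamma> + t) / 2"
  have e: "0 \<le> e" "\<epsilon> \<le> e"
    by (simp_all add: e_def)
  have "(1 + e) * (1 - \<gamma>) < 2 * \<gamma> - 1"
  proof (cases "\<epsilon> \<le> 0")
    case True
    then show ?thesis
      using assms(1) by (simp add: e_def)
  next
    case False
    have "\<epsilon> * (1 - \<gamma>) < (\<gamma> / (1 - \<gamma>) - 2) * (1 - \<gamma>)"
      using assms(2,3) by (intro mult_strict_right_mono) auto
    also have "\<dots> = \<gamma> - 2 * (1 - \<gamma>)"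
      using assms(2) by (simp add: field_simps)
    finally show ?thesis
      using False by (simp add: e_def algebra_simps)
  qed
  then have "1 - \<gamma> < t"
    using e by (simp add: t_def pos_less_divide_eq mult.commute)
  then have a: "1 - \<gamma> < a" and "a < t"
    by (simp_all add: a_def)
  then have "a * (1 + e) < t * (1 + e)"
    using e by simp
  also have "\<dots> = 2 * \<gamma> - 1"
    using e by (simp add: t_def)
  finally have "a * (1 + e) - 2 * \<gamma> < -1"
    by simp
  with a e show ?thesis
    by (intro that)
qed

definition growth_count :: "(nat \<Rightarrow> nat) \<Rightarrow> nat \<Rightarrow> nat" where
  "growth_count z m = card {n \<in> {1..m}. 1 \<le> z n}"

lemma growth_count_mono: "m \<le> m' \<Longrightarrow> growth_count z m \<le> growth_count z m'"
  unfolding growth_count_def by (intro card_mono) auto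

lemma card_window_le: "0 \<le> x \<Longrightarrow> real (card {m<..<m + nat \<lceil>x\<rceil>}) \<le> x"
  by (simp add: of_nat_diff) linarith

definition fast_regrowth :: "(nat \<Rightarrow> nat) \<Rightarrow> real \<Rightarrow> nat \<Rightarrow> bool" where
  "fast_regrowth z b m \<longleftrightarrow>
     1 \<le> z m \<and> (\<exists>m' \<in> {m<..<m + nat \<lceil>(2 * real m) powr b\<rceil>}. 1 \<le> z m')"

context
  fixes z :: "nat \<Rightarrow> nat"
  assumes frequent_growth: "\<exists>\<^sub>\<infinity>n. 1 \<le> z n"
begin

private lemma growth_time_Suc_conv:
  "growth_time z k < growth_time z (Suc k) \<and> 1 \<le> z (growth_time z (Suc k))"
proof -
  have "\<exists>n. growth_time z k < n \<and> 1 \<le> z n"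
    using frequent_growth by (auto simp: INFM_nat)
  from LeastI_ex[OF this] show ?thesis by simp
qed

lemma growth_time_less_Suc: "growth_time z k < growth_time z (Suc k)"
  using growth_time_Suc_conv by blast

lemma growth_time_Suc_growth: "1 \<le> z (growth_time z (Suc k))"
  using growth_time_Suc_conv by blast

lemma no_growth_between_growth_times:
  assumes "growth_time z k < n" "n < growth_time z (Suc k)"
  shows "z n = 0"
  using not_less_Least[of n "\<lambda>n. growth_time z k < n \<and> 1 \<le> z n"] assms by auto

lemma strict_mono_growth_time: "strict_mono (growth_time z)"
  by (rule strict_monoI_Suc) (rule growth_time_less_Suc)

lemma growth_count_growth_time: "growth_count z (growth_time z k) = k"
proof (induction k)
  case 0
  then show ?case by (simp add: growth_count_def)
next
  case (Suc k)
  let ?t = "growth_time z"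
  have "n \<le> ?t k \<or> n = ?t (Suc k)" if "n \<le> ?t (Suc k)" "1 \<le> z n" for n
    using no_growth_between_growth_times[of k n] that
    by (cases "n \<le> ?t k") (auto simp del: growth_time.simps simp: le_less)
  then have "{n \<in> {1..?t (Suc k)}. 1 \<le> z n} = insert (?t (Suc k)) {n \<in> {1..?t k}. 1 \<le> z n}"
    using growth_time_less_Suc[of k] growth_time_Suc_growth[of k]
      strict_mono_imp_increasing[OF strict_mono_growth_time, of "Suc k"]
    by (auto simp del: growth_time.simps)
  moreover have "?t (Suc k) \<notin> {n \<in> {1..?t k}. 1 \<le> z n}"
    using growth_time_less_Suc[of k] by auto
  ultimately show ?case
    using Suc by (simp add: growth_count_def)
qed

lemma eventually_long_growth_gaps:
  assumes few_growths: "\<forall>\<^sub>F m in sequentially. real (growth_count z m) \<le> (2 * real m) powr a"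
    and no_fast_regrowth: "\<forall>\<^sub>F m in sequentially. \<not> fast_regrowth z (a * (1 + e)) m"
    and "0 \<le> e"
  shows "\<forall>\<^sub>F i in sequentially. real i powr (1 + e) \<le> real (delta_growth_time z i)"
proof -
  let ?t = "growth_time z"
  have "filterlim ?t sequentially sequentially"
    using strict_mono_growth_time by (rule filterlim_subseq)
  then have "\<forall>\<^sub>F i in sequentially. real (growth_count z (?t i)) \<le> (2 * real (?t i)) powr a
      \<and> \<not> fast_regrowth z (a * (1 + e)) (?t i)"
    using few_growths no_fast_regrowth by (auto simp: filterlim_iff intro: eventually_conj)
  then show ?thesis
  proof (rule eventually_mono)
    fix i
    assume i: "real (growth_count z (?t i)) \<le> (2 * real (?t i)) powr a
      \<and> \<not> fast_regrowth z (a * (1 + e)) (?t i)"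
    show "real i powr (1 + e) \<le> real (delta_growth_time z i)"
    proof (rule ccontr)
      assume short: "\<not> ?thesis"
      then obtain j where j: "i = Suc j"
        by (cases i) auto
      define m where "m = ?t i"
      have "real (?t (Suc i) - m) < real i powr (1 + e)"
        using short by (simp add: delta_growth_time_def m_def)
      also have "\<dots> \<le> ((2 * real m) powr a) powr (1 + e)"
        using i \<open>0 \<le> e\<close> by (intro powr_mono2) (auto simp: growth_count_growth_time m_def)
      also have "\<dots> \<le> of_int \<lceil>(2 * real m) powr (a * (1 + e))\<rceil>"
        by (simp add: powr_powr)
      finally have "?t (Suc i) < m + nat \<lceil>(2 * real m) powr (a * (1 + e))\<rceil>"
        by linarith
      then have "fast_regrowth z (a * (1 + e)) m"
        using growth_time_less_Suc[of i] growth_time_Suc_growth[of i] growth_time_Suc_growth[of j]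
        unfolding fast_regrowth_def m_def j by auto
      then show False
        using i by (simp add: m_def)
    qed
  qed
qed

end

lemma (in prob_space) AE_eventually_notin_summable:
  assumes "\<And>n. A n \<in> events" "summable (\<lambda>n. prob (A n))"
  shows "AE \<omega> in M. \<forall>\<^sub>F n in sequentially. \<omega> \<notin> A n"
proof -
  have "AE \<omega> in M. \<forall>\<^sub>F n in sequentially. \<omega> \<in> space M - A n"
    by (rule borel_cantelli_AE1) (use assms in \<open>auto simp: less_top[symmetric]\<close>)
  then show ?thesis
    by eventually_elim (auto elim: eventually_mono)
qed

locale bernoulli_leaf_counts = prob_space +
  fixes Z :: "nat \<Rightarrow> 'a \<Rightarrow> nat" and \<gamma> :: real
  assumes gamma_pos: "0 < \<gamma>" and gamma_less_1: "\<gamma> < 1"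
    and indep_Z: "indep_vars (\<lambda>_. count_space UNIV) Z {1..}"
    and distr_Z: "\<And>n. 1 \<le> n \<Longrightarrow>
      distr M (count_space UNIV) (Z n) = measure_pmf (ber_nat (real n powr (-\<gamma>)))"
begin

abbreviation growth_event :: "nat \<Rightarrow> 'a set" where
  "growth_event n \<equiv> {\<omega> \<in> space M. 1 \<le> Z n \<omega>}"

lemma measurable_Z: "1 \<le> n \<Longrightarrow> Z n \<in> M \<rightarrow>\<^sub>M count_space UNIV"
  using indep_Z unfolding indep_vars_def by auto

lemma events_Z: "1 \<le> n \<Longrightarrow> {\<omega> \<in> space M. P (Z n \<omega>)} \<in> events"
  using measurable_sets[OF measurable_Z, of n "{k. P k}"]
  by (simp add: vimage_def Int_def conj_commute)

lemma prob_growth: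
  assumes "1 \<le> n"
  shows "prob (growth_event n) = real n powr (-\<gamma>)"
proof -
  have p: "0 \<le> real n powr (-\<gamma>)" "real n powr (-\<gamma>) \<le> 1"
    using assms gamma_pos by (auto simp: powr_minus divide_simps intro: ge_one_powr_ge_zero)
  have "prob (growth_event n) = measure (distr M (count_space UNIV) (Z n)) {k. 1 \<le> k}"
    using measurable_Z[OF assms]
    by (subst measure_distr) (auto simp: vimage_def Int_def conj_commute)
  also have "\<dots> = measure_pmf.prob (bernoulli_pmf (real n powr (-\<gamma>))) {True}"
    unfolding distr_Z[OF assms] ber_nat_def measure_map_pmf
    by (rule arg_cong[where f="measure_pmf.prob _"]) auto
  also have "\<dots> = real n powr (-\<gamma>)"
    using p by (simp add: measure_pmf_single)
  finally show ?thesis .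
qed

lemma prob_no_growth:
  assumes "1 \<le> n"
  shows "prob {\<omega> \<in> space M. Z n \<omega> = 0} = 1 - real n powr (-\<gamma>)"
proof -
  have "{\<omega> \<in> space M. Z n \<omega> = 0} = space M - growth_event n"
    by auto
  then show ?thesis
    using prob_growth[OF assms] events_Z[OF assms] by (simp add: prob_compl)
qed

lemma prob_INT_Z:
  assumes "finite J" "J \<noteq> {}" "J \<subseteq> {1..}"
  shows "prob (\<Inter>j\<in>J. {\<omega> \<in> space M. Z j \<omega> \<in> A j}) = (\<Prod>j\<in>J. prob {\<omega> \<in> space M. Z j \<omega> \<in> A j})"
proof -
  have "indep_sets (\<lambda>i. {Z i -` B \<inter> space M | B. B \<in> sets (count_space UNIV)}) {1..}"
    using indep_Z unfolding indep_vars_def2 by auto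
  moreover have "\<And>j. {\<omega> \<in> space M. Z j \<omega> \<in> A j} = Z j -` A j \<inter> space M"
    by auto
  ultimately show ?thesis
    by (simp only:) (rule indep_setsD[OF _ assms(3,2,1)], auto)
qed

(* Comparing with n^-1, the survival probability telescopes: \<Prod>j=n..N. (1 - 1/j) = (n-1)/N. *)
lemma prob_no_growth_between:
  assumes "2 \<le> n" "n \<le> N"
  shows "prob (\<Inter>j\<in>{n..N}. {\<omega> \<in> space M. Z j \<omega> = 0}) \<le> (real n - 1) / real N"
proof -
  have "prob (\<Inter>j\<in>{n..N}. {\<omega> \<in> space M. Z j \<omega> = 0}) = (\<Prod>j\<in>{n..N}. 1 - real j powr (-\<gamma>))"
    using assms prob_INT_Z[of "{n..N}" "\<lambda>_. {0}"] by (simp add: prob_no_growth)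
  also have "\<dots> \<le> (\<Prod>j\<in>{n..N}. 1 - 1 / real j)"
  proof (rule prod_mono)
    fix j
    assume j: "j \<in> {n..N}"
    have "real j powr (-1) \<le> real j powr (-\<gamma>)"
      using j assms gamma_less_1 by (intro powr_mono) auto
    moreover have "real j powr (-\<gamma>) \<le> 1"
      using j assms gamma_pos by (auto intro!: ge_one_powr_ge_zero simp: powr_minus divide_simps)
    ultimately
    show "0 \<le> 1 - real j powr (-\<gamma>) \<and> 1 - real j powr (-\<gamma>) \<le> 1 - 1 / real j"
      by (simp add: powr_minus_divide)
  qed
  also have "\<dots> = (real n - 1) / real N"
    using assms(2)
  proof (induction N rule: dec_induct)
    case base
    then show ?case using assms by (simp add: field_simps)
  next
    case (step k)
    then have "{n..Suc k} = insert (Suc k) {n..k}" "real k > 0"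
      using assms by auto
    then show ?case
      using step by (simp add: field_simps)
  qed
  finally show ?thesis .
qed

lemma AE_frequent_growth: "AE \<omega> in M. \<exists>\<^sub>\<infinity>n. 1 \<le> Z n \<omega>"
proof -
  have "AE \<omega> in M. \<exists>m>n. 1 \<le> Z m \<omega>" for n
  proof -
    define E where "E = (\<Inter>j\<in>{n+2..}. {\<omega> \<in> space M. Z j \<omega> = 0})"
    have E: "E \<in> events"
      unfolding E_def by (intro sets.countable_INT') (auto intro!: events_Z)
    have "prob E \<le> real (n + 1) / real N" if "n + 2 \<le> N" for N
    proof -
      have "prob E \<le> prob (\<Inter>j\<in>{n+2..N}. {\<omega> \<in> space M. Z j \<omega> = 0})"
        using that by (intro finite_measure_mono sets.finite_INT events_Z) (auto simp: E_def)
      also have "\<dots> \<le> real (n + 1) / real N"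
        using prob_no_growth_between[of "n + 2" N] that by simp
      finally show ?thesis .
    qed
    then have "prob E \<le> 0"
      by (intro LIMSEQ_le_const[OF lim_const_over_n]) auto
    then have "E \<in> null_sets M"
      using E by (simp add: measure_le_0_iff null_setsI emeasure_eq_measure)
    then show ?thesis
      by (rule AE_I') (auto simp: E_def not_le Suc_le_eq)
  qed
  then show ?thesis
    by (simp add: AE_all_countable INFM_nat)
qed

lemma prob_growth_pair:
  assumes "1 \<le> m" "m < m'"
  shows "prob (growth_event m \<inter> growth_event m') = real m powr (-\<gamma>) * real m' powr (-\<gamma>)"
proof -
  have "growth_event m \<inter> growth_event m' = (\<Inter>j\<in>{m, m'}. {\<omega> \<in> space M. Z j \<omega> \<in> {1..}})"
    by auto
  then show ?thesis
    using assms prob_INT_Z[of "{m, m'}" "\<lambda>_. {1..}"] prob_growth[of m] prob_growth[of m'] by simp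
qed

lemma events_fast_regrowth: "{\<omega> \<in> space M. fast_regrowth (\<lambda>n. Z n \<omega>) b m} \<in> events"
proof (cases "m = 0")
  case True
  then show ?thesis
    by (simp add: fast_regrowth_def)
next
  case False
  have "{\<omega> \<in> space M. fast_regrowth (\<lambda>n. Z n \<omega>) b m} = growth_event m \<inter>
      (\<Union>m'\<in>{m<..<m + nat \<lceil>(2 * real m) powr b\<rceil>}. growth_event m')"
    by (auto simp: fast_regrowth_def)
  also have "\<dots> \<in> events"
    using False by (intro sets.Int sets.finite_UN events_Z) auto
  finally show ?thesis .
qed

lemma prob_fast_regrowth:
  assumes "1 \<le> m"
  shows "prob {\<omega> \<in> space M. fast_regrowth (\<lambda>n. Z n \<omega>) b m} \<le> 2 powr b * real m powr (b - 2 * \<gamma>)"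
proof -
  define D where "D = {m<..<m + nat \<lceil>(2 * real m) powr b\<rceil>}"
  have "{\<omega> \<in> space M. fast_regrowth (\<lambda>n. Z n \<omega>) b m}
      = (\<Union>m'\<in>D. growth_event m \<inter> growth_event m')"
    by (auto simp: fast_regrowth_def D_def)
  then have "prob {\<omega> \<in> space M. fast_regrowth (\<lambda>n. Z n \<omega>) b m}
      \<le> (\<Sum>m'\<in>D. prob (growth_event m \<inter> growth_event m'))"
    by (simp only:) (rule finite_measure_subadditive_finite,
        use assms in \<open>auto simp: D_def intro!: sets.Int events_Z\<close>)
  also have "\<dots> \<le> (\<Sum>m'\<in>D. real m powr (-\<gamma>) * real m powr (-\<gamma>))"
  proof (rule sum_mono)
    fix m'
    assume "m' \<in> D"
    then have "m < m'"
      by (simp add: D_def)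
    moreover have "real m' powr (-\<gamma>) \<le> real m powr (-\<gamma>)"
      using \<open>m < m'\<close> assms gamma_pos by (intro powr_mono2') auto
    ultimately show
      "prob (growth_event m \<inter> growth_event m') \<le> real m powr (-\<gamma>) * real m powr (-\<gamma>)"
      using prob_growth_pair[OF assms] by (simp add: mult_left_mono)
  qed
  also have "\<dots> \<le> (2 * real m) powr b * real m powr (-\<gamma>) * real m powr (-\<gamma>)"
  proof -
    have "real (card D) \<le> (2 * real m) powr b"
      unfolding D_def by (rule card_window_le) simp
    then show ?thesis
      by (simp add: mult.assoc mult_right_mono)
  qed
  also have "\<dots> = 2 powr b * real m powr (b - 2 * \<gamma>)"
    using assms by (simp add: powr_mult powr_diff powr_minus field_simps flip: powr_add)
  finally show ?thesis .
qed

lemma AE_eventually_no_fast_regrowth: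
  assumes "b - 2 * \<gamma> < -1"
  shows "AE \<omega> in M. \<forall>\<^sub>F m in sequentially. \<not> fast_regrowth (\<lambda>n. Z n \<omega>) b m"
proof -
  have "summable (\<lambda>m. prob {\<omega> \<in> space M. fast_regrowth (\<lambda>n. Z n \<omega>) b m})"
  proof (rule summable_comparison_test')
    show "summable (\<lambda>m. 2 powr b * real m powr (b - 2 * \<gamma>))"
      using assms by (simp add: summable_real_powr_iff)
    show "norm (prob {\<omega> \<in> space M. fast_regrowth (\<lambda>n. Z n \<omega>) b m})
        \<le> 2 powr b * real m powr (b - 2 * \<gamma>)"
      if "1 \<le> m" for m
      using prob_fast_regrowth[OF that] by simp
  qed
  then show ?thesis
    using AE_eventually_notin_summable[OF events_fast_regrowth] by auto
qed

lemma growth_count_eq_sum_indicator: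
  assumes "\<omega> \<in> space M"
  shows "real (growth_count (\<lambda>n. Z n \<omega>) m) = (\<Sum>n\<in>{1..m}. indicator (growth_event n) \<omega>)"
  using assms by (simp add: growth_count_def indicator_def Int_def)

lemma integrable_growth_count: "integrable M (\<lambda>\<omega>. real (growth_count (\<lambda>n. Z n \<omega>) m))"
proof -
  have "integrable M (\<lambda>\<omega>. \<Sum>n\<in>{1..m}. indicator (growth_event n) \<omega> :: real)"
    by (intro Bochner_Integration.integrable_sum integrable_real_indicator events_Z)
      (auto simp: less_top[symmetric])
  moreover have "integrable M (\<lambda>\<omega>. real (growth_count (\<lambda>n. Z n \<omega>) m))
      \<longleftrightarrow> integrable M (\<lambda>\<omega>. \<Sum>n\<in>{1..m}. indicator (growth_event n) \<omega> :: real)"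
    by (rule Bochner_Integration.integrable_cong) (simp_all add: growth_count_eq_sum_indicator)
  ultimately show ?thesis
    by simp
qed

lemma expectation_growth_count:
  "expectation (\<lambda>\<omega>. real (growth_count (\<lambda>n. Z n \<omega>) m)) = (\<Sum>n=1..m. real n powr (-\<gamma>))"
proof -
  have "expectation (\<lambda>\<omega>. real (growth_count (\<lambda>n. Z n \<omega>) m))
      = expectation (\<lambda>\<omega>. \<Sum>n\<in>{1..m}. indicator (growth_event n) \<omega>)"
    by (rule Bochner_Integration.integral_cong) (simp_all add: growth_count_eq_sum_indicator)
  also have "\<dots> = (\<Sum>n\<in>{1..m}. expectation (indicator (growth_event n)))"
    by (rule Bochner_Integration.integral_sum)
      (auto intro!: integrable_real_indicator events_Z simp: less_top[symmetric])
  also have "\<dots> = (\<Sum>n\<in>{1..m}. prob (growth_event n))"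
    by (rule sum.cong) (auto simp: less_top[symmetric] events_Z intro!: arg_cong[where f=prob])
  also have "\<dots> = (\<Sum>n=1..m. real n powr (-\<gamma>))"
    by (intro sum.cong refl prob_growth) simp
  finally show ?thesis .
qed

lemma prob_growth_count_ge:
  assumes "0 < c"
  shows "prob {\<omega> \<in> space M. c \<le> real (growth_count (\<lambda>n. Z n \<omega>) m)}
    \<le> real m powr (1 - \<gamma>) / ((1 - \<gamma>) * c)"
proof -
  have "prob {\<omega> \<in> space M. c \<le> real (growth_count (\<lambda>n. Z n \<omega>) m)}
      \<le> expectation (\<lambda>\<omega>. real (growth_count (\<lambda>n. Z n \<omega>) m)) / c"
    using assms
    by (intro integral_Markov_inequality_measure[OF integrable_growth_count, of "space M"]) auto
  also have "\<dots> \<le> real m powr (1 - \<gamma>) / (1 - \<gamma>) / c"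
    unfolding expectation_growth_count
    using sum_powr_neg_le[of \<gamma> m] gamma_pos gamma_less_1 assms by (intro divide_right_mono) auto
  finally show ?thesis
    by simp
qed

lemma AE_eventually_growth_count_le:
  assumes a: "1 - \<gamma> < a"
  shows "AE \<omega> in M. \<forall>\<^sub>F m in sequentially. real (growth_count (\<lambda>n. Z n \<omega>) m) \<le> (2 * real m) powr a"
proof -
  define A where
    "A k = {\<omega> \<in> space M. 2 powr (real k * a) \<le> real (growth_count (\<lambda>n. Z n \<omega>) (2 ^ k))}" for k
  have A: "A k \<in> events" for k
    unfolding A_def
    by (rule borel_measurable_le[OF borel_measurable_const
          borel_measurable_integrable[OF integrable_growth_count]])
  define q where "q = 2 powr (1 - \<gamma> - a)"
  have q: "0 < q" "q < 1"
    using a by (auto simp: q_def powr_less_one)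
  have prob_A: "prob (A k) \<le> q ^ k / (1 - \<gamma>)" for k
  proof -
    have "prob (A k) \<le> real (2 ^ k) powr (1 - \<gamma>) / ((1 - \<gamma>) * 2 powr (real k * a))"
      unfolding A_def by (rule prob_growth_count_ge) simp
    also have "\<dots> = q ^ k / (1 - \<gamma>)"
    proof -
      have "real (2 ^ k) powr (1 - \<gamma>) = 2 powr (real k * (1 - \<gamma>))"
        by (simp add: powr_realpow[symmetric] powr_powr)
      moreover have "q ^ k = 2 powr (real k * (1 - \<gamma>)) / 2 powr (real k * a)"
        by (simp add: q_def powr_power powr_diff[symmetric] algebra_simps)
      ultimately show ?thesis
        by simp
    qed
    finally show ?thesis .
  qed
  have "summable (\<lambda>k. q ^ k / (1 - \<gamma>))"
    using q by (intro summable_divide summable_geometric) simp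
  then have "summable (\<lambda>k. prob (A k))"
    by (rule summable_comparison_test') (use prob_A in simp)
  then have "AE \<omega> in M. \<forall>\<^sub>F k in sequentially. \<omega> \<notin> A k"
    by (rule AE_eventually_notin_summable[OF A])
  then show ?thesis
  proof (rule AE_mp, intro AE_I2 impI)
    fix \<omega>
    assume "\<omega> \<in> space M" and "\<forall>\<^sub>F k in sequentially. \<omega> \<notin> A k"
    then obtain K
      where K: "\<And>k. K \<le> k \<Longrightarrow> real (growth_count (\<lambda>n. Z n \<omega>) (2 ^ k)) < 2 powr (real k * a)"
      by (auto simp: A_def eventually_sequentially not_le)
    show "\<forall>\<^sub>F m in sequentially. real (growth_count (\<lambda>n. Z n \<omega>) m) \<le> (2 * real m) powr a"
    proof (rule eventually_sequentiallyI)
      fix m :: nat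
      assume m: "2 ^ K + 2 \<le> m"
      then obtain n where n: "2 ^ n < m" "m \<le> 2 ^ Suc n"
        using ex_power_ivl2[of 2 m] by auto
      have "(2::nat) ^ K < 2 ^ Suc n"
        using m n(2) by linarith
      then have "K \<le> Suc n"
        by (simp only: power_strict_increasing_iff)
      have "real (growth_count (\<lambda>n. Z n \<omega>) m) \<le> real (growth_count (\<lambda>n. Z n \<omega>) (2 ^ Suc n))"
        using n(2) by (simp add: growth_count_mono)
      also have "\<dots> < 2 powr (real (Suc n) * a)"
        by (rule K) fact
      also have "\<dots> = real (2 ^ Suc n) powr a"
        by (subst powr_powr[symmetric], subst powr_realpow) simp_all
      also have "\<dots> \<le> (2 * real m) powr a"
        using n(1) a gamma_less_1 by (intro powr_mono2) auto
      finally show "real (growth_count (\<lambda>n. Z n \<omega>) m) \<le> (2 * real m) powr a"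
        by simp
    qed
  qed
qed

end

theorem lemma4p2:
  fixes M :: "'a measure" and Z :: "nat \<Rightarrow> 'a \<Rightarrow> nat"
    and \<gamma> \<epsilon> :: real
  assumes "prob_space M"
    and "2/3 < \<gamma>" and "\<gamma> < 1"
    and "prob_space.indep_vars M (\<lambda>_. count_space UNIV) Z {1..}"
    and "\<And>n. 1 \<le> n \<Longrightarrow>
           distr M (count_space UNIV) (Z n) = measure_pmf (ber_nat (real n powr (-\<gamma>)))"
    and "\<epsilon> < \<gamma> / (1 - \<gamma>) - 2"
  shows "AE \<omega> in M. \<not> (\<exists>\<^sub>\<infinity> i.
           real (delta_growth_time (\<lambda>n. Z n \<omega>) i) < real i powr (1 + \<epsilon>))"
proof -
  interpret bernoulli_leaf_counts M Z \<gamma>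
    using assms(1-5) by (auto simp: bernoulli_leaf_counts_def bernoulli_leaf_counts_axioms_def)
  obtain a e where a: "1 - \<gamma> < a" and b: "a * (1 + e) - 2 * \<gamma> < -1" and e: "0 \<le> e" "\<epsilon> \<le> e"
    using exponent_choice[OF assms(2,3,6)] .
  have "AE \<omega> in M. \<forall>\<^sub>F i in sequentially.
      real i powr (1 + e) \<le> real (delta_growth_time (\<lambda>n. Z n \<omega>) i)"
    using AE_frequent_growth AE_eventually_growth_count_le[OF a]
      AE_eventually_no_fast_regrowth[OF b]
    by eventually_elim (rule eventually_long_growth_gaps, use e in auto)
  then show ?thesis
  proof eventually_elim
    case (elim \<omega>)
    with eventually_ge_at_top[of "1::nat"]
    have "\<forall>\<^sub>F i in sequentially. \<not> real (delta_growth_time (\<lambda>n. Z n \<omega>) i) < real i powr (1 + \<epsilon>)"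
    proof eventually_elim
      case (elim i)
      then show ?case
        using powr_mono[of "1 + \<epsilon>" "1 + e" "real i"] e by simp
    qed
    then show ?case
      by (simp add: not_frequently cofinite_eq_sequentially)
  qed
qed

end
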